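(* Let $P\subset\mathbb{R}^d$ be a full-dimensional lattice polytope with facet presentation $P=\{x: n_F(x)\ge -h_F\ \forall F\in\mathcal{F}(P)\}$ and codegree $a$, and suppose $P=\lfloor aP\rfloor+\{P\}$. Then \[\lfloor aP\rfloor=\{x\in\mathbb{R}^d: n_F(x)\ge 1-ah_F \text{ for all } F\in\mathcal{F}(P)\}\] and \[\{P\}=\{x\in\mathbb{R}^d: n_F(x)\ge (a-1)h_F-1 \text{ for all } F\in\mathcal{F}(P)\}.\] In particular, the right-hand sides are lattice polytopes. Furthermore, if $a=1$, then $\{P\}$ is a reflexive polytope.
   Context: $\mathcal{F}(P)$ is the set of facets of $P$; $n_F\in(\mathbb{Z}^d)^*$ is the primitive inner normal of $F$ and $h_F\in\mathbb{Z}$. The codegree is $a=\min\{k\in\mathbb{Z}_{\ge1}: \mathrm{int}(kP)\cap\mathbb{Z}^d\ne\varnothing\}$. For a lattice polytope $Q$, $\lfloor Q\rfloor=\mathrm{conv}(\mathrm{int}(Q)\cap\mathbb{Z}^d)$. The remainder polytope is $\{P\}=\mathrm{conv}\{x\in\mathbb{Z}^d: n_F(x)\ge (a-1)h_F-1\ \forall F\in\mathcal{F}(P)\}$. $+$ is Minkowski sum. The dual of a polytope $Q$ is $Q^*=\{n\in(\mathbb{R}^d)^*: n(x)\ge -1\ \forall x\in Q\}$; $Q$ is reflexive if both $Q$ and $Q^*$ are lattice polytopes (with respect to $\mathbb{Z}^d$ and $(\mathbb{Z}^d)^*$). *)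

theory Defs
  imports "HOL-Analysis.Analysis"
begin

definition lattice_point :: "real^'n \<Rightarrow> bool" where
  "lattice_point x \<longleftrightarrow> (\<forall>i. x $ i \<in> \<int>)"

definition lattice_polytope :: "(real^'n) set \<Rightarrow> bool" where
  "lattice_polytope P \<longleftrightarrow>
     (\<exists>S. finite S \<and> S \<noteq> {} \<and> (\<forall>x\<in>S. lattice_point x) \<and> P = convex hull S)"

text \<open>Primitive integral (dual) vector; the dual lattice is identified with Z^d
  via the standard inner product.\<close>
definition primitive_vec :: "real^'n \<Rightarrow> bool" where
  "primitive_vec v \<longleftrightarrow> lattice_point v \<and> v \<noteq> 0 \<and>
     (\<forall>k::int. k > 0 \<and> (\<forall>i. \<exists>m::int. v $ i = of_int k * of_int m) \<longrightarrow> k = 1)"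

definition facet_normal :: "(real^'n) set \<Rightarrow> (real^'n) set \<Rightarrow> real^'n \<Rightarrow> int \<Rightarrow> bool" where
  "facet_normal P F n h \<longleftrightarrow> F facet_of P \<and> primitive_vec n \<and>
     (\<forall>x\<in>P. n \<bullet> x \<ge> - of_int h) \<and> F = {x\<in>P. n \<bullet> x = - of_int h}"

definition dilate :: "nat \<Rightarrow> (real^'n) set \<Rightarrow> (real^'n) set" where
  "dilate k P = (\<lambda>x. real k *\<^sub>R x) ` P"

definition codegree :: "(real^'n) set \<Rightarrow> nat" where
  "codegree P = (LEAST k::nat. k \<ge> 1 \<and> (\<exists>x. lattice_point x \<and> x \<in> interior (dilate k P)))"

definition lattice_floor :: "(real^'n) set \<Rightarrow> (real^'n) set" where
  "lattice_floor Q = convex hull {x. x \<in> interior Q \<and> lattice_point x}"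

definition remainder_polytope :: "(real^'n) set \<Rightarrow> (real^'n) set" where
  "remainder_polytope P = convex hull {x. lattice_point x \<and>
     (\<forall>F n h. facet_normal P F n h \<longrightarrow>
        n \<bullet> x \<ge> (real (codegree P) - 1) * of_int h - 1)}"

definition minkowski_sum :: "(real^'n) set \<Rightarrow> (real^'n) set \<Rightarrow> (real^'n) set" where
  "minkowski_sum A B = {x + y | x y. x \<in> A \<and> y \<in> B}"

definition polar_dual :: "(real^'n) set \<Rightarrow> (real^'n) set" where
  "polar_dual Q = {v. \<forall>x\<in>Q. v \<bullet> x \<ge> -1}"

definition reflexive_polytope :: "(real^'n) set \<Rightarrow> bool" where
  "reflexive_polytope Q \<longleftrightarrow> lattice_polytope Q \<and> lattice_polytope (polar_dual Q)"

end

(*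
  An interior lattice point of aP satisfies n_F x > -a h_F, hence
  n_F x >= 1 - a h_F by integrality, so the floor of aP lies in Q1 = {n_F x >= 1 - a h_F}; the
  remainder polytope lies in Q2 = {n_F x >= (a-1) h_F - 1} by definition, and Q1 + Q2 lies in P
  because the right-hand sides add up to -h_F. Thus floor + remainder = P contains Q1 + Q2, and
  separating hyperplanes let one cancel the compact convex summands, giving floor = Q1 and
  remainder = Q2. For a = 1 the remainder is {n_F x >= -1}, whose polar is the convex hull of
  the primitive facet normals, a lattice polytope.
*)

theory Submission
  imports Defs
begin

lemma lattice_point_int_coords:
  fixes x :: "real^'n"
  assumes "lattice_point x"
  obtains A :: "'n \<Rightarrow> int" where "\<And>i. x$i = of_int (A i)"
proof -
  have "\<forall>i. \<exists>k::int. x$i = of_int k"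
    using assms unfolding lattice_point_def Ints_def by auto
  then show ?thesis
    using that by metis
qed

lemma lattice_point_inner_Ints:
  assumes "lattice_point x" "lattice_point y"
  shows "x \<bullet> y \<in> \<int>"
  using assms unfolding lattice_point_def inner_vec_def by (auto intro!: Ints_mult)

lemma orthogonal_codim1_multiple:
  fixes D :: "'a::euclidean_space set"
  assumes dim: "dim D = DIM('a) - 1" and "m \<noteq> 0"
    and m: "\<forall>v\<in>D. m \<bullet> v = 0" and a: "\<forall>v\<in>D. a \<bullet> v = 0"
  shows "\<exists>c. a = c *\<^sub>R m"
proof -
  define W where "W = {y. \<forall>x\<in>span D. orthogonal x y}"
  have "dim W + dim (span D) = DIM('a)"
    unfolding W_def using dim_subspace_orthogonal_to_vectors[of "span D" UNIV] by simp
  then have "dim W \<le> dim (span {m})"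
    using dim \<open>m \<noteq> 0\<close> by simp
  moreover have "subspace W"
    unfolding W_def by (auto simp: subspace_def orthogonal_clauses)
  moreover have perp: "v \<in> W" if "\<forall>x\<in>D. v \<bullet> x = 0" for v
    unfolding W_def using that orthogonal_to_span[of _ D v]
    by (auto simp: orthogonal_def inner_commute)
  then have "span {m} \<subseteq> W"
    using m \<open>subspace W\<close> by (simp add: span_minimal)
  ultimately have "span {m} = W"
    by (simp add: subspace_dim_equal)
  then show ?thesis
    using perp[OF a] by (auto simp: span_singleton)
qed

lemma det_Ints:
  fixes A :: "real^'n^'n"
  assumes "\<And>i j. A$i$j \<in> \<int>"
  shows "det A \<in> \<int>"
  unfolding det_def using assms by (intro Ints_sum Ints_mult Ints_prod) auto

lemma det_row_eq_inner:
  fixes c :: "'n \<Rightarrow> real^'n"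
  shows "det ((\<chi> k. if k = i then w else c k) :: real^'n^'n) =
     (\<chi> j. det ((\<chi> k. if k = i then axis j 1 else c k) :: real^'n^'n)) \<bullet> w"
proof -
  have "det ((\<chi> k. if k = i then w else c k) :: real^'n^'n) =
     det ((\<chi> k. if k = i then (\<Sum>j\<in>UNIV. w$j *s axis j 1) else c k) :: real^'n^'n)"
    by (subst basis_expansion) (rule refl)
  also have "\<dots> = (\<Sum>j\<in>UNIV. w$j * det ((\<chi> k. if k = i then axis j 1 else c k) :: real^'n^'n))"
    by (simp add: det_linear_row_sum[where a="\<lambda>i j. w$j *s axis j 1", simplified] det_row_mul)
  finally show ?thesis
    by (simp add: inner_vec_def mult.commute)
qed

lemma det_nonzero_if_rows_independent:
  fixes A :: "real^'n^'n"
  assumes "independent (rows A)" "card (rows A) = CARD('n)"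
  shows "det A \<noteq> 0"
  using assms by (simp add: det_eq_0_rank row_rank_def dim_eq_card_independent)

text \<open>The normal is the cofactor vector (generalised cross product) of B, so its entries are
  determinants of integer matrices.\<close>
lemma lattice_orthogonal_vector_of_basis:
  fixes B :: "(real^'n) set"
  assumes lat: "\<forall>v\<in>B. lattice_point v" and "independent B" and card: "card B = CARD('n) - 1"
  obtains m where "lattice_point m" "m \<noteq> 0" "\<forall>v\<in>B. m \<bullet> v = 0"
proof -
  have "finite B"
    using \<open>independent B\<close> by (simp add: independent_imp_finite)
  obtain i :: 'n where True by simp
  have "card (UNIV - {i}) = card B"
    using card by (simp add: card_Diff_subset)
  then obtain g where g: "bij_betw g (UNIV - {i}) B"
    using \<open>finite B\<close> finite_same_card_bij by (metis finite)
  define M where "M w = ((\<chi> k. if k = i then w else g k) :: real^'n^'n)" for w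
  define m where "m = (\<chi> j. det (M (axis j 1)))"
  have m_inner: "m \<bullet> w = det (M w)" for w
    unfolding M_def m_def det_row_eq_inner[of i w] ..
  have "g k $ j \<in> \<int>" if "k \<noteq> i" for k j
    using g lat that unfolding bij_betw_def lattice_point_def by blast
  then have "lattice_point m"
    unfolding lattice_point_def m_def M_def by (auto intro!: det_Ints simp: axis_def)
  moreover have "m \<noteq> 0"
  proof -
    have "dim B < CARD('n)"
      using \<open>independent B\<close> card by (simp add: dim_eq_card_independent)
    moreover have "dim (UNIV :: (real^'n) set) = CARD('n)"
      by simp
    ultimately obtain w where w: "w \<notin> span B"
      by (metis dim_span less_irrefl UNIV_eq_I)
    then have "w \<notin> B"
      using span_base by blast
    have "rows (M w) = insert w B"
      using g unfolding rows_def M_def row_def bij_betw_def by (auto simp: image_def)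
    then have "det (M w) \<noteq> 0"
      using \<open>independent B\<close> card w \<open>w \<notin> B\<close> \<open>finite B\<close>
      by (intro det_nonzero_if_rows_independent) (simp_all add: independent_insert)
    then show ?thesis
      using m_inner[of w] by auto
  qed
  moreover have "m \<bullet> b = 0" if "b \<in> B" for b
  proof -
    obtain k where "k \<noteq> i" "g k = b"
      using g \<open>b \<in> B\<close> unfolding bij_betw_def by auto
    then show ?thesis
      unfolding m_inner M_def by (intro det_identical_rows[of i k]) (auto simp: row_def vec_eq_iff)
  qed
  ultimately show ?thesis
    using that by blast
qed

lemma lattice_orthogonal_vector_exists:
  fixes D :: "(real^'n) set"
  assumes "\<forall>v\<in>D. lattice_point v" "dim D = CARD('n) - 1"
  obtains m where "lattice_point m" "m \<noteq> 0" "\<forall>v\<in>D. m \<bullet> v = 0"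
proof -
  obtain B where B: "B \<subseteq> D" "independent B" "D \<subseteq> span B" "card B = dim D"
    by (rule basis_exists)
  have "\<forall>v\<in>B. lattice_point v" "card B = CARD('n) - 1"
    using B(1,4) assms by auto
  then obtain m where m: "lattice_point m" "m \<noteq> 0" "\<forall>v\<in>B. m \<bullet> v = 0"
    by (rule lattice_orthogonal_vector_of_basis[OF _ B(2)])
  then have "\<forall>v\<in>D. m \<bullet> v = 0"
    using B(3) orthogonal_to_span[of _ B m] by (auto simp: orthogonal_def)
  then show ?thesis
    using that m(1,2) by blast
qed

lemma primitive_vec_common_divisor:
  assumes "primitive_vec v" "k > 0" "\<And>i. v $ i = of_int (k * c i)"
  shows "k = 1"
proof -
  have "\<forall>i. \<exists>m::int. v $ i = of_int k * of_int m"
    using assms(3) by auto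
  then show ?thesis
    using assms(1,2) unfolding primitive_vec_def by blast
qed

lemma Gcd_range_pos:
  fixes A :: "'a \<Rightarrow> int"
  assumes "A i \<noteq> 0"
  shows "Gcd (range A) > 0"
proof -
  have "Gcd (range A) \<noteq> 0"
    using assms by auto
  then show ?thesis
    by (simp add: order_less_le)
qed

lemma primitive_vec_div_Gcd:
  fixes A :: "'n::finite \<Rightarrow> int"
  assumes "A i \<noteq> 0"
  shows "primitive_vec ((\<chi> j. of_int (A j div Gcd (range A))) :: real^'n)"
  unfolding primitive_vec_def
proof (intro conjI allI impI)
  define G where "G = Gcd (range A)"
  have "G > 0"
    using assms unfolding G_def by (rule Gcd_range_pos)
  have G_dvd: "G dvd A j" for j
    unfolding G_def by (rule Gcd_dvd) simp
  show "lattice_point ((\<chi> j. of_int (A j div Gcd (range A))) :: real^'n)"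
    unfolding lattice_point_def by simp
  have "A i div G \<noteq> 0"
    using G_dvd[of i] assms by auto
  then show "(\<chi> j. of_int (A j div Gcd (range A))) \<noteq> (0 :: real^'n)"
    unfolding G_def[symmetric] by (auto simp: vec_eq_iff)
  fix k :: int
  assume k: "0 < k \<and> (\<forall>j. \<exists>c::int. ((\<chi> j. of_int (A j div Gcd (range A))) :: real^'n) $ j = of_int k * of_int c)"
  have "G * k dvd A j" for j
  proof -
    obtain c :: int where "(of_int (A j div G) :: real) = of_int (k * c)"
      using k unfolding G_def by auto
    then have "A j = G * (k * c)"
      using G_dvd[of j] by (metis of_int_eq_iff dvd_mult_div_cancel)
    then show ?thesis
      by simp
  qed
  then have "G * k dvd G"
    unfolding G_def by (intro Gcd_greatest) auto
  then have "G * k \<le> G * 1"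
    using \<open>G > 0\<close> by (simp add: zdvd_imp_le)
  then show "k = 1"
    using \<open>G > 0\<close> k by simp
qed

lemma lattice_point_primitive_multiple:
  fixes m :: "real^'n"
  assumes "lattice_point m" "m \<noteq> 0"
  obtains g :: real where "g > 0" "primitive_vec ((1/g) *\<^sub>R m)"
proof -
  obtain A :: "'n \<Rightarrow> int" where A: "\<And>j. m$j = of_int (A j)"
    using assms(1) lattice_point_int_coords by blast
  obtain i where "A i \<noteq> 0"
    using assms(2) by (auto simp: vec_eq_iff A)
  define G where "G = Gcd (range A)"
  have "G > 0"
    using \<open>A i \<noteq> 0\<close> unfolding G_def by (rule Gcd_range_pos)
  have "(1 / of_int G) *\<^sub>R m = ((\<chi> j. of_int (A j div G)) :: real^'n)"
  unfolding vec_eq_iff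
  proof
    fix j
    obtain t where "A j = G * t"
      using Gcd_dvd[of "A j" "range A"] unfolding G_def by blast
    then show "((1 / of_int G) *\<^sub>R m) $ j = ((\<chi> j. of_int (A j div G)) :: real^'n) $ j"
      using \<open>G > 0\<close> by (simp add: A)
  qed
  then show ?thesis
    using that[of "of_int G"] \<open>G > 0\<close> primitive_vec_div_Gcd[of A i, OF \<open>A i \<noteq> 0\<close>] unfolding G_def by simp
qed

lemma primitive_vec_scaleR_eq:
  assumes n: "primitive_vec n" and n': "primitive_vec (l *\<^sub>R n)" and "l > 0"
  shows "l = 1"
proof -
  obtain A where A: "\<And>i. n$i = of_int (A i)"
    using n lattice_point_int_coords unfolding primitive_vec_def by blast
  obtain A' where A': "\<And>i. (l *\<^sub>R n)$i = of_int (A' i)"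
    using n' lattice_point_int_coords unfolding primitive_vec_def by blast
  obtain i where "n$i \<noteq> 0"
    using n unfolding primitive_vec_def by (auto simp: vec_eq_iff)
  then have "l = of_int (A' i) / of_int (A i)"
    using A[of i] A'[of i] by (simp add: field_simps)
  then have "l \<in> \<rat>"
    by simp
  then obtain p q :: int where pq: "q > 0" "coprime p q" "l = of_int p / of_int q"
    by (rule Rats_cases')
  have "p > 0"
    using pq \<open>l > 0\<close> by (simp add: zero_less_divide_iff)
  have eq: "q * A' j = p * A j" for j
  proof -
    have "(of_int (q * A' j) :: real) = of_int (p * A j)"
      using A[of j] A'[of j] pq(1,3) by (simp add: field_simps)
    then show ?thesis
      by (simp only: of_int_eq_iff)
  qed
  have "p dvd q * A' j" for j
    unfolding eq by simp
  then have "p dvd A' j" for j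
    using pq(2) by (simp add: coprime_dvd_mult_right_iff)
  then have "p = 1"
    using A' by (intro primitive_vec_common_divisor[OF n' \<open>p > 0\<close>, of "\<lambda>j. A' j div p"]) simp
  have "q dvd p * A j" for j
    unfolding eq[symmetric] by simp
  then have "q dvd A j" for j
    using pq(2) by (simp add: coprime_commute coprime_dvd_mult_right_iff)
  then have "q = 1"
    using A by (intro primitive_vec_common_divisor[OF n \<open>q > 0\<close>, of "\<lambda>j. A j div q"]) simp
  show ?thesis
    using pq(3) \<open>p = 1\<close> \<open>q = 1\<close> by simp
qed

lemma facet_normal_facet: "facet_normal P F n h \<Longrightarrow> F facet_of P"
  unfolding facet_normal_def by (elim conjE)

lemma facet_normal_primitive: "facet_normal P F n h \<Longrightarrow> primitive_vec n"
  unfolding facet_normal_def by (elim conjE)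

lemma facet_normal_eq_on_facet: "facet_normal P F n h \<Longrightarrow> x \<in> F \<Longrightarrow> n \<bullet> x = - of_int h"
  unfolding facet_normal_def by (elim conjE) simp

lemma primitive_vec_nonzero: "primitive_vec n \<Longrightarrow> n \<noteq> 0"
  unfolding primitive_vec_def by (elim conjE)

lemma interior_subset_halfspace_gt:
  fixes a :: "'a::euclidean_space"
  assumes "a \<noteq> 0" "S \<subseteq> {x. a \<bullet> x \<ge> r}" "x \<in> interior S"
  shows "a \<bullet> x > r"
proof -
  have "x \<in> interior {x. a \<bullet> x \<ge> r}"
    using interior_mono[OF assms(2)] assms(3) by blast
  then show ?thesis
    using assms(1) by simp
qed

lemma lattice_affine_hyperplane_normal:
  fixes S :: "(real^'n) set"
  assumes lat: "\<forall>x\<in>S. lattice_point x" and "x0 \<in> S" and dim: "aff_dim S = int CARD('n) - 1"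
  obtains m where "lattice_point m" "m \<noteq> 0"
    "\<forall>a b. (\<forall>x\<in>S. a \<bullet> x = b) \<longrightarrow> (\<exists>c. a = c *\<^sub>R m)"
proof -
  define D where "D = (+) (- x0) ` S"
  have "aff_dim S = int (dim D)"
    unfolding D_def using aff_dim_eq_dim[OF hull_inc[OF \<open>x0 \<in> S\<close>]] .
  with dim have dim_D: "dim D = CARD('n) - 1"
    by linarith
  have "\<forall>v\<in>D. lattice_point v"
    using lat \<open>x0 \<in> S\<close> unfolding D_def lattice_point_def by auto
  then obtain m where m: "lattice_point m" "m \<noteq> 0" "\<forall>v\<in>D. m \<bullet> v = 0"
    using lattice_orthogonal_vector_exists dim_D by blast
  have "\<forall>a b. (\<forall>x\<in>S. a \<bullet> x = b) \<longrightarrow> (\<exists>c. a = c *\<^sub>R m)"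
  proof (intro allI impI orthogonal_codim1_multiple[of D m])
    fix a b
    assume const: "\<forall>x\<in>S. a \<bullet> x = b"
    have "a \<bullet> v = 0" if "v \<in> D" for v
    proof -
      obtain y where "y \<in> S" "v = - x0 + y"
        using \<open>v \<in> D\<close> unfolding D_def by blast
      moreover have "a \<bullet> y = b" "a \<bullet> x0 = b"
        using const \<open>y \<in> S\<close> \<open>x0 \<in> S\<close> by blast+
      ultimately show ?thesis
        by (simp add: inner_diff_right)
    qed
    then show "\<forall>v\<in>D. a \<bullet> v = 0"
      by blast
  qed (use dim_D m in simp_all)
  then show ?thesis
    using that m(1,2) by blast
qed

text \<open>A facet of the hull of S is the hull of a subset of S, so its affine hull is spanned by
  lattice points.\<close>
lemma lattice_facet_direction:
  fixes P :: "(real^'n) set"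
  assumes "lattice_polytope P" "interior P \<noteq> {}" "F facet_of P"
  obtains x0 m where "x0 \<in> F" "lattice_point x0" "lattice_point m" "m \<noteq> 0"
    "\<forall>a b. (\<forall>x\<in>F. a \<bullet> x = b) \<longrightarrow> (\<exists>c. a = c *\<^sub>R m)"
proof -
  obtain S where S: "finite S" "\<forall>x\<in>S. lattice_point x" "P = convex hull S"
    using assms(1) unfolding lattice_polytope_def by blast
  obtain S' where S': "S' \<subseteq> S" "F = convex hull S'"
    using face_of_convex_hull_subset[OF finite_imp_compact[OF S(1)]] assms(3) S(3)
    by (metis facet_of_imp_face_of)
  obtain x0 where "x0 \<in> S'"
    using assms(3) S'(2) unfolding facet_of_def by auto
  have "aff_dim F = int CARD('n) - 1"
    using assms(3) aff_dim_nonempty_interior[OF assms(2)] unfolding facet_of_def by simp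
  then have "aff_dim S' = int CARD('n) - 1"
    unfolding S'(2) aff_dim_convex_hull .
  moreover have lat: "\<forall>x\<in>S'. lattice_point x"
    using S'(1) S(2) by blast
  ultimately obtain m where m: "lattice_point m" "m \<noteq> 0"
    and multiple: "\<forall>a b. (\<forall>x\<in>S'. a \<bullet> x = b) \<longrightarrow> (\<exists>c. a = c *\<^sub>R m)"
    using lattice_affine_hyperplane_normal[OF lat \<open>x0 \<in> S'\<close>] by blast
  have "S' \<subseteq> F"
    unfolding S'(2) by (rule hull_subset)
  then have "\<forall>a b. (\<forall>x\<in>F. a \<bullet> x = b) \<longrightarrow> (\<exists>c. a = c *\<^sub>R m)"
    using multiple by blast
  then show ?thesis
    using that[of x0 m] \<open>x0 \<in> S'\<close> \<open>S' \<subseteq> F\<close> lat m by blast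
qed

lemma facet_primitive_normal_exists:
  fixes P :: "(real^'n) set"
  assumes "lattice_polytope P" "interior P \<noteq> {}" "F facet_of P"
    and "a \<noteq> 0" "F = P \<inter> {x. a \<bullet> x = b}"
  obtains c where "c > 0" "primitive_vec ((- c) *\<^sub>R a)"
proof -
  obtain x0 m where "x0 \<in> F" "lattice_point x0" and m: "lattice_point m" "m \<noteq> 0"
    and multiple: "\<forall>a b. (\<forall>x\<in>F. a \<bullet> x = b) \<longrightarrow> (\<exists>c. a = c *\<^sub>R m)"
    by (rule lattice_facet_direction[OF assms(1-3)])
  obtain t where t: "a = t *\<^sub>R m"
    using multiple assms(5) by blast
  with assms(4) have "t \<noteq> 0"
    by auto
  define m' where "m' = (- sgn t) *\<^sub>R m"
  have "lattice_point m'" "m' \<noteq> 0"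
    using m \<open>t \<noteq> 0\<close> unfolding m'_def lattice_point_def by (auto simp: sgn_if)
  then obtain g where g: "g > 0" "primitive_vec ((1/g) *\<^sub>R m')"
    by (rule lattice_point_primitive_multiple)
  moreover have "(1/g) *\<^sub>R m' = (- (1 / (\<bar>t\<bar> * g))) *\<^sub>R a"
    using \<open>t \<noteq> 0\<close> unfolding m'_def t by (auto simp: sgn_if)
  moreover have "1 / (\<bar>t\<bar> * g) > 0"
    using g \<open>t \<noteq> 0\<close> by simp
  ultimately show ?thesis
    using that by metis
qed

lemma facet_normal_exists:
  fixes P :: "(real^'n) set"
  assumes "lattice_polytope P" "interior P \<noteq> {}" "F facet_of P"
    and "a \<noteq> 0" "P \<subseteq> {x. a \<bullet> x \<le> b}" "F = P \<inter> {x. a \<bullet> x = b}"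
  obtains n h c where "c > 0" "n = (- c) *\<^sub>R a" "facet_normal P F n h"
proof -
  obtain c where "c > 0" and primitive: "primitive_vec ((- c) *\<^sub>R a)"
    by (rule facet_primitive_normal_exists[OF assms(1-4,6)])
  define n where "n = (- c) *\<^sub>R a"
  obtain x0 m where x0: "x0 \<in> F" "lattice_point x0"
    and "lattice_point m" "m \<noteq> 0" "\<forall>a b. (\<forall>x\<in>F. a \<bullet> x = b) \<longrightarrow> (\<exists>c. a = c *\<^sub>R m)"
    by (rule lattice_facet_direction[OF assms(1-3)])
  have "n \<bullet> x0 \<in> \<int>"
    using primitive x0(2) lattice_point_inner_Ints unfolding n_def primitive_vec_def by blast
  then obtain k :: int where k: "n \<bullet> x0 = of_int k"
    by (rule Ints_cases)
  have ax0: "a \<bullet> x0 = b"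
    using x0(1) assms(6) by blast
  have "facet_normal P F n (- k)"
    unfolding facet_normal_def
  proof (intro conjI ballI)
    show "F facet_of P" "primitive_vec n"
      using assms(3) primitive n_def by simp_all
    show "- of_int (- k) \<le> n \<bullet> x" if "x \<in> P" for x
    proof -
      have "c * (a \<bullet> x) \<le> c * b"
        using assms(5) that \<open>c > 0\<close> by auto
      then show ?thesis
        using k ax0 unfolding n_def by simp
    qed
    have "n \<bullet> x = n \<bullet> x0 \<longleftrightarrow> a \<bullet> x = a \<bullet> x0" for x
      using \<open>c > 0\<close> unfolding n_def by simp
    then show "F = {x \<in> P. n \<bullet> x = - of_int (- k)}"
      using assms(6) k ax0 by auto
  qed
  then show ?thesis
    using that \<open>c > 0\<close> n_def by blast
qed

lemma facet_normal_interior_gt: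
  assumes "facet_normal P F n h" "p \<in> interior P"
  shows "n \<bullet> p > - of_int h"
proof -
  have "n \<noteq> 0"
    using assms(1) by (intro primitive_vec_nonzero facet_normal_primitive)
  moreover have "P \<subseteq> {x. n \<bullet> x \<ge> - of_int h}"
    using assms(1) unfolding facet_normal_def by (elim conjE) auto
  ultimately show ?thesis
    using assms(2) by (rule interior_subset_halfspace_gt)
qed

lemma facet_normal_unique:
  fixes P :: "(real^'n) set"
  assumes "lattice_polytope P" "interior P \<noteq> {}"
    and n: "facet_normal P F n h" and n': "facet_normal P F n' h'"
  shows "n = n'"
proof -
  obtain x0 m where "x0 \<in> F" "lattice_point x0" "lattice_point m" "m \<noteq> 0"
    and multiple: "\<forall>a b. (\<forall>x\<in>F. a \<bullet> x = b) \<longrightarrow> (\<exists>c. a = c *\<^sub>R m)"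
    by (rule lattice_facet_direction[OF assms(1,2) facet_normal_facet[OF n]])
  obtain c where c: "n = c *\<^sub>R m"
    using multiple facet_normal_eq_on_facet[OF n] by blast
  obtain c' where c': "n' = c' *\<^sub>R m"
    using multiple facet_normal_eq_on_facet[OF n'] by blast
  have "c \<noteq> 0"
    using c n facet_normal_primitive primitive_vec_nonzero by fastforce
  then have n'_eq: "n' = (c' / c) *\<^sub>R n"
    unfolding c c' by simp
  obtain p where "p \<in> interior P"
    using assms(2) by blast
  have "n \<bullet> (p - x0) > 0" "n' \<bullet> (p - x0) > 0"
    using facet_normal_interior_gt[OF n \<open>p \<in> interior P\<close>]
      facet_normal_interior_gt[OF n' \<open>p \<in> interior P\<close>]
      facet_normal_eq_on_facet[OF n \<open>x0 \<in> F\<close>] facet_normal_eq_on_facet[OF n' \<open>x0 \<in> F\<close>]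
    by (simp_all add: inner_diff_right)
  moreover have "n' \<bullet> (p - x0) = (c' / c) * (n \<bullet> (p - x0))"
    unfolding n'_eq by (rule inner_scaleR_left)
  ultimately have "c' / c > 0"
    using zero_less_mult_pos2 by metis
  moreover have "primitive_vec n" "primitive_vec ((c' / c) *\<^sub>R n)"
    using facet_normal_primitive[OF n] facet_normal_primitive[OF n'] unfolding n'_eq .
  ultimately have "c' / c = 1"
    using primitive_vec_scaleR_eq by blast
  then show ?thesis
    using n'_eq by simp
qed

definition facet_polyhedron :: "(real^'n) set \<Rightarrow> (int \<Rightarrow> real) \<Rightarrow> (real^'n) set" where
  "facet_polyhedron P c = {x. \<forall>F n h. facet_normal P F n h \<longrightarrow> n \<bullet> x \<ge> c h}"

lemma facet_polyhedron_eq_Inter: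
  "facet_polyhedron P c = \<Inter> {{x. n \<bullet> x \<ge> c h} | F n h. facet_normal P F n h}"
  unfolding facet_polyhedron_def by blast

lemma convex_facet_polyhedron: "convex (facet_polyhedron P c)"
  unfolding facet_polyhedron_eq_Inter by (rule convex_Inter) (auto intro: convex_halfspace_ge)

lemma closed_facet_polyhedron: "closed (facet_polyhedron P c)"
  unfolding facet_polyhedron_eq_Inter by (rule closed_Inter) (auto intro: closed_halfspace_ge)

lemma minkowski_sum_facet_polyhedron_subset:
  "minkowski_sum (facet_polyhedron P c) (facet_polyhedron P c') \<subseteq>
     facet_polyhedron P (\<lambda>h. c h + c' h)"
  unfolding minkowski_sum_def facet_polyhedron_def by (auto simp: inner_add_right add_mono)

lemma facet_normal_separates:
  fixes P :: "(real^'n) set"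
  assumes P: "lattice_polytope P" and int: "interior P \<noteq> {}" and "x \<notin> P"
  obtains F n h where "facet_normal P F n h" "n \<bullet> x < - of_int h"
proof -
  have "polytope P"
    using P unfolding lattice_polytope_def polytope_def by blast
  then have "polyhedron P"
    by (rule polytope_imp_polyhedron)
  then obtain H where H: "finite H" "P = affine hull P \<inter> \<Inter>H"
    "\<forall>h\<in>H. \<exists>a b. a \<noteq> 0 \<and> h = {x. a \<bullet> x \<le> b}"
    "\<forall>H'. H' \<subset> H \<longrightarrow> P \<subset> affine hull P \<inter> \<Inter>H'"
    unfolding polyhedron_Int_affine_minimal by blast
  then obtain a b where ab: "\<And>h. h \<in> H \<Longrightarrow> a h \<noteq> 0 \<and> h = {x. a h \<bullet> x \<le> b h}"
    by metis
  have P_eq: "P = \<Inter>H"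
    using H(2) unfolding affine_hull_nonempty_interior[OF int] by simp
  then obtain h where h: "h \<in> H" "a h \<bullet> x > b h"
    using \<open>x \<notin> P\<close> ab by force
  define F where "F = P \<inter> {x. a h \<bullet> x = b h}"
  have "F facet_of P"
    unfolding F_def using facet_of_polyhedron_explicit[OF H(1,2) ab] H(4) h(1) by blast
  moreover have "P \<subseteq> {x. a h \<bullet> x \<le> b h}"
    using P_eq h(1) ab by blast
  ultimately obtain n k c where nk: "c > 0" "n = (- c) *\<^sub>R a h" "facet_normal P F n k"
    using ab[OF h(1)] by (elim conjE facet_normal_exists[OF P int _ _ _ F_def])
  obtain y where y: "y \<in> F"
    using \<open>F facet_of P\<close> unfolding facet_of_def by blast
  have "n \<bullet> x < n \<bullet> y"
    using nk(1,2) h(2) y unfolding F_def by simp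
  also have "n \<bullet> y = - of_int k"
    using facet_normal_eq_on_facet[OF nk(3) y] .
  finally show ?thesis
    using that nk(3) by blast
qed

lemma lattice_polytope_eq_facet_polyhedron:
  fixes P :: "(real^'n) set"
  assumes "lattice_polytope P" "interior P \<noteq> {}"
  shows "P = facet_polyhedron P (\<lambda>h. - of_int h)"
proof
  show "P \<subseteq> facet_polyhedron P (\<lambda>h. - of_int h)"
    unfolding facet_polyhedron_def facet_normal_def by blast
  show "facet_polyhedron P (\<lambda>h. - of_int h) \<subseteq> P"
  proof (rule subsetI, rule ccontr)
    fix x
    assume x: "x \<in> facet_polyhedron P (\<lambda>h. - of_int h)" "x \<notin> P"
    obtain F n h where "facet_normal P F n h" "n \<bullet> x < - of_int h"
      by (rule facet_normal_separates[OF assms x(2)])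
    then show False
      using x(1) unfolding facet_polyhedron_def by force
  qed
qed

definition facet_normals :: "(real^'n) set \<Rightarrow> (real^'n) set" where
  "facet_normals P = {n. \<exists>F h. facet_normal P F n h}"

lemma finite_facet_normals:
  fixes P :: "(real^'n) set"
  assumes "lattice_polytope P" "interior P \<noteq> {}"
  shows "finite (facet_normals P)"
proof -
  have "facet_normals P = (\<Union>F\<in>{F. F facet_of P}. {n. \<exists>h. facet_normal P F n h})"
    unfolding facet_normals_def facet_normal_def by blast
  moreover have "finite {F. F facet_of P}"
    using assms(1) finite_polytope_facets unfolding lattice_polytope_def polytope_def by blast
  moreover have "finite {n. \<exists>h. facet_normal P F n h}" for F
  proof (cases "\<exists>n h. facet_normal P F n h")
    case True
    then obtain n0 h0 where "facet_normal P F n0 h0"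
      by blast
    then have "{n. \<exists>h. facet_normal P F n h} \<subseteq> {n0}"
      using facet_normal_unique[OF assms] by blast
    then show ?thesis
      by (rule finite_subset) simp
  qed simp
  ultimately show ?thesis
    by simp
qed

lemma facet_normals_nonempty:
  fixes P :: "(real^'n) set"
  assumes "lattice_polytope P" "interior P \<noteq> {}"
  shows "facet_normals P \<noteq> {}"
proof -
  have "polytope P"
    using assms(1) unfolding lattice_polytope_def polytope_def by blast
  moreover have "0 < aff_dim P"
    using aff_dim_nonempty_interior[OF assms(2)] by simp
  ultimately obtain F where F: "F facet_of P"
    using polytope_facet_exists by blast
  then obtain a b where "a \<noteq> 0" "P \<subseteq> {x. a \<bullet> x \<le> b}" "F = P \<inter> {x. a \<bullet> x = b}"
    using facet_of_polyhedron[OF polytope_imp_polyhedron[OF \<open>polytope P\<close>]] by blast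
  then obtain n h c where "c > 0" "n = (- c) *\<^sub>R a" "facet_normal P F n h"
    by (rule facet_normal_exists[OF assms F])
  then show ?thesis
    unfolding facet_normals_def by blast
qed

lemma finite_bounded_lattice_points:
  fixes A :: "(real^'n) set"
  assumes "bounded A" "\<forall>x\<in>A. lattice_point x"
  shows "finite A"
proof -
  obtain r where r: "\<forall>x\<in>A. norm x \<le> r"
    using assms(1) bounded_iff by blast
  define Z where "Z = (of_int ` {-\<lceil>r\<rceil>..\<lceil>r\<rceil>} :: real set)"
  have "x $ i \<in> Z" if xA: "x \<in> A" for x i
  proof -
    obtain c where c: "\<And>j. x $ j = of_int (c j)"
      using assms(2) xA lattice_point_int_coords by blast
    have "norm x \<le> r"
      using r xA by blast
    then have "\<bar>x $ i\<bar> \<le> r"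
      using component_le_norm_cart[of x i] by linarith
    then have "of_int \<bar>c i\<bar> \<le> (of_int \<lceil>r\<rceil> :: real)"
      using le_of_int_ceiling[of r] unfolding c by (simp only: of_int_abs)
    then have "\<bar>c i\<bar> \<le> \<lceil>r\<rceil>"
      by (simp only: of_int_le_iff)
    then have "c i \<in> {-\<lceil>r\<rceil>..\<lceil>r\<rceil>}"
      by (auto simp: abs_le_iff)
    then show ?thesis
      unfolding Z_def c by (rule imageI)
  qed
  then have "vec_nth ` A \<subseteq> Pi\<^sub>E UNIV (\<lambda>_. Z)"
    by (auto simp: PiE_iff)
  moreover have "finite (Pi\<^sub>E (UNIV :: 'n set) (\<lambda>_. Z))"
    by (rule finite_PiE) (simp_all add: Z_def)
  ultimately have "finite (vec_nth ` A)"
    by (rule finite_subset)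
  moreover have "inj_on vec_nth A"
    by (simp add: inj_on_def vec_nth_inject)
  ultimately show ?thesis
    by (rule finite_imageD)
qed

lemma minkowski_sum_commute: "minkowski_sum A B = minkowski_sum B A"
  unfolding minkowski_sum_def by (auto; metis add.commute)

lemma bounded_minkowski_summand:
  assumes "A \<noteq> {}" "bounded (minkowski_sum A B)"
  shows "bounded B"
proof -
  obtain a where "a \<in> A"
    using assms(1) by blast
  then have "B \<subseteq> (\<lambda>z. - a + z) ` minkowski_sum A B"
    unfolding minkowski_sum_def by force
  then show ?thesis
    using bounded_subset bounded_translation[OF assms(2)] by blast
qed

text \<open>Separate a point of the bigger summand from the convex summand and compare the
  minima of the separating functional on both sides.\<close>
lemma minkowski_sum_cancel_subset:
  fixes A A' B B' :: "(real^'n) set"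
  assumes "convex A" "closed A" "compact B'" "B' \<noteq> {}" "B \<subseteq> B'"
    and "minkowski_sum A' B' \<subseteq> minkowski_sum A B"
  shows "A' \<subseteq> A"
proof
  fix x
  assume "x \<in> A'"
  show "x \<in> A"
  proof (rule ccontr)
    assume "x \<notin> A"
    then obtain u \<beta> where u: "u \<bullet> x < \<beta>" "\<forall>y\<in>A. \<beta> < u \<bullet> y"
      using separating_hyperplane_closed_point[OF assms(1,2)] by blast
    have "continuous_on B' (\<lambda>y. u \<bullet> y)"
      by (intro continuous_intros)
    then obtain b' where b': "b' \<in> B'" "\<forall>y\<in>B'. u \<bullet> b' \<le> u \<bullet> y"
      using continuous_attains_inf[OF assms(3,4)] by blast
    have "x + b' \<in> minkowski_sum A B"
      using \<open>x \<in> A'\<close> b'(1) assms(6) unfolding minkowski_sum_def by blast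
    then obtain y z where yz: "x + b' = y + z" "y \<in> A" "z \<in> B"
      unfolding minkowski_sum_def by blast
    have "u \<bullet> x + u \<bullet> b' = u \<bullet> y + u \<bullet> z"
      using arg_cong[OF yz(1), of "inner u"] by (simp add: inner_add_right)
    moreover have "u \<bullet> x < u \<bullet> y"
      using u yz(2) by force
    moreover have "u \<bullet> b' \<le> u \<bullet> z"
      using b'(2) yz(3) assms(5) by blast
    ultimately show False
      by linarith
  qed
qed

lemma minkowski_sum_sandwich:
  fixes A B Q R :: "(real^'n) set"
  assumes "A \<subseteq> Q" "B \<subseteq> R" "minkowski_sum Q R \<subseteq> minkowski_sum A B"
    and "compact A" "compact B" "convex A" "convex B" "closed Q" "closed R" "A \<noteq> {}" "B \<noteq> {}"
  shows "A = Q" "B = R"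
proof -
  have "bounded (minkowski_sum A B)"
    using compact_sums[OF assms(4,5)] compact_imp_bounded unfolding minkowski_sum_def by blast
  then have "bounded (minkowski_sum Q R)"
    using assms(3) by (rule bounded_subset)
  moreover have "Q \<noteq> {}" "R \<noteq> {}"
    using assms(1,2,10,11) by auto
  ultimately have "bounded R" "bounded Q"
    using bounded_minkowski_summand minkowski_sum_commute by metis+
  then have "compact Q" "compact R"
    using assms(8,9) by (simp_all add: compact_eq_bounded_closed)
  have "Q \<subseteq> A"
    using minkowski_sum_cancel_subset[OF assms(6) compact_imp_closed[OF assms(4)] \<open>compact R\<close> _ assms(2,3)]
      assms(2,11) by blast
  moreover have "R \<subseteq> B"
    using minkowski_sum_cancel_subset[OF assms(7) compact_imp_closed[OF assms(5)] \<open>compact Q\<close> _ assms(1)]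
      assms(1,3,10) minkowski_sum_commute by blast
  ultimately show "A = Q" "B = R"
    using assms(1,2) by blast+
qed

lemma bounded_ray_eq_0:
  fixes y :: "'a::real_normed_vector"
  assumes "bounded S" "\<And>t. t \<ge> 0 \<Longrightarrow> t *\<^sub>R y \<in> S"
  shows "y = 0"
proof (rule ccontr)
  assume "y \<noteq> 0"
  obtain B where B: "\<forall>x\<in>S. norm x \<le> B"
    using assms(1) bounded_iff by blast
  define t where "t = (\<bar>B\<bar> + 1) / norm y"
  have "t \<ge> 0"
    unfolding t_def by simp
  then have "norm (t *\<^sub>R y) \<le> B"
    using assms(2) B by blast
  moreover have "norm (t *\<^sub>R y) = \<bar>B\<bar> + 1"
    using \<open>y \<noteq> 0\<close> \<open>t \<ge> 0\<close> unfolding t_def by simp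
  ultimately show False
    by linarith
qed

lemma convex_polar_dual: "convex (polar_dual Q)"
proof -
  have "polar_dual Q = (\<Inter>x\<in>Q. {v. x \<bullet> v \<ge> -1})"
    by (auto simp: polar_dual_def inner_commute)
  then show ?thesis
    by (auto intro!: convex_INT convex_halfspace_ge)
qed

text \<open>Otherwise the ray spanned by y would lie in the bounded polyhedron.\<close>
lemma bounded_polyhedron_separating_level_neg:
  fixes N :: "(real^'n) set"
  assumes "bounded {x. \<forall>n\<in>N. n \<bullet> x \<ge> -1}" "N \<noteq> {}" "\<And>n. n \<in> N \<Longrightarrow> \<beta> < n \<bullet> y"
  shows "\<beta> < 0"
proof (rule ccontr)
  assume "\<not> \<beta> < 0"
  have "t *\<^sub>R y \<in> {x. \<forall>n\<in>N. n \<bullet> x \<ge> -1}" if "t \<ge> 0" for t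
  proof -
    have "- 1 \<le> n \<bullet> (t *\<^sub>R y)" if "n \<in> N" for n
    proof -
      have "0 \<le> t * (n \<bullet> y)"
        using assms(3)[OF that] \<open>\<not> \<beta> < 0\<close> \<open>t \<ge> 0\<close> by simp
      then show ?thesis
        by simp
    qed
    then show ?thesis
      by blast
  qed
  then have "y = 0"
    using bounded_ray_eq_0 assms(1) by blast
  then show False
    using assms(2,3) \<open>\<not> \<beta> < 0\<close> by auto
qed

text \<open>A functional y separating v from the convex hull of N is rescaled to a point of the
  polyhedron on which v is below -1.\<close>
lemma polar_dual_polyhedron_eq_convex_hull:
  fixes N :: "(real^'n) set"
  defines "Q \<equiv> {x. \<forall>n\<in>N. n \<bullet> x \<ge> -1}"
  assumes "finite N" "N \<noteq> {}" "bounded Q"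
  shows "polar_dual Q = convex hull N"
proof
  show "convex hull N \<subseteq> polar_dual Q"
    by (intro hull_minimal convex_polar_dual) (auto simp: polar_dual_def Q_def)
  show "polar_dual Q \<subseteq> convex hull N"
  proof (rule subsetI, rule ccontr)
    fix v
    assume v: "v \<in> polar_dual Q" "v \<notin> convex hull N"
    moreover have "closed (convex hull N)"
      using assms(2) by (simp add: compact_imp_closed finite_imp_compact_convex_hull)
    ultimately obtain y \<beta> where y: "y \<bullet> v < \<beta>" "\<forall>z\<in>convex hull N. \<beta> < y \<bullet> z"
      using separating_hyperplane_closed_point[OF convex_convex_hull] by blast
    have yN: "\<beta> < n \<bullet> y" if "n \<in> N" for n
      using y(2) hull_inc[OF that] by (simp add: inner_commute)
    then have "\<beta> < 0"
      using bounded_polyhedron_separating_level_neg assms(3,4) unfolding Q_def by blast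
    define x where "x = (1 / - \<beta>) *\<^sub>R y"
    have "- 1 \<le> n \<bullet> x" if "n \<in> N" for n
    proof -
      have "- 1 \<le> (n \<bullet> y) / - \<beta>"
        using yN[OF that] \<open>\<beta> < 0\<close> by (simp add: field_simps)
      then show ?thesis
        by (simp add: x_def)
    qed
    then have "x \<in> Q"
      unfolding Q_def by blast
    moreover have "(y \<bullet> v) / - \<beta> < - 1"
      using y(1) \<open>\<beta> < 0\<close> by (simp add: field_simps)
    then have "v \<bullet> x < -1"
      by (simp add: x_def inner_commute)
    ultimately show False
      using v(1) unfolding polar_dual_def by force
  qed
qed

lemma compact_lattice_polytope: "lattice_polytope P \<Longrightarrow> compact P"
  unfolding lattice_polytope_def by (auto intro: finite_imp_compact_convex_hull)

lemma reflexive_polytope_facet_polyhedron: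
  fixes P :: "(real^'n) set"
  assumes "lattice_polytope P" "interior P \<noteq> {}"
    and lattice: "lattice_polytope (facet_polyhedron P (\<lambda>_. - 1))"
  shows "reflexive_polytope (facet_polyhedron P (\<lambda>_. - 1))"
proof -
  have Q_eq: "facet_polyhedron P (\<lambda>_. - 1) = {x. \<forall>n\<in>facet_normals P. n \<bullet> x \<ge> - 1}"
    unfolding facet_polyhedron_def facet_normals_def by blast
  have "bounded {x. \<forall>n\<in>facet_normals P. n \<bullet> x \<ge> - 1}"
    using compact_imp_bounded[OF compact_lattice_polytope[OF lattice]] unfolding Q_eq .
  then have "polar_dual (facet_polyhedron P (\<lambda>_. - 1)) = convex hull facet_normals P"
    unfolding Q_eq
    using polar_dual_polyhedron_eq_convex_hull finite_facet_normals[OF assms(1,2)]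
      facet_normals_nonempty[OF assms(1,2)] by blast
  moreover have "\<forall>n\<in>facet_normals P. lattice_point n"
    unfolding facet_normals_def using facet_normal_primitive primitive_vec_def by blast
  ultimately have "lattice_polytope (polar_dual (facet_polyhedron P (\<lambda>_. - 1)))"
    unfolding lattice_polytope_def
    using finite_facet_normals[OF assms(1,2)] facet_normals_nonempty[OF assms(1,2)] by blast
  then show ?thesis
    unfolding reflexive_polytope_def using lattice by blast
qed

lemma lattice_floor_dilate_subset:
  fixes P :: "(real^'n) set"
  shows "lattice_floor (dilate k P) \<subseteq> facet_polyhedron P (\<lambda>h. 1 - real k * of_int h)"
  unfolding lattice_floor_def
proof (intro hull_minimal convex_facet_polyhedron subsetI)
  fix x
  assume "x \<in> {x. x \<in> interior (dilate k P) \<and> lattice_point x}"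
  then have x: "x \<in> interior (dilate k P)" "lattice_point x"
    by auto
  have "n \<bullet> x \<ge> 1 - real k * of_int h" if fn: "facet_normal P F n h" for F n h
  proof -
    have "n \<bullet> y \<ge> - (real k * of_int h)" if "y \<in> dilate k P" for y
    proof -
      obtain z where z: "z \<in> P" "y = real k *\<^sub>R z"
        using \<open>y \<in> dilate k P\<close> unfolding dilate_def by blast
      have "- of_int h \<le> n \<bullet> z"
        using fn z(1) unfolding facet_normal_def by blast
      then have "real k * (- of_int h) \<le> real k * (n \<bullet> z)"
        by (rule mult_left_mono) simp
      then show ?thesis
        using z(2) by simp
    qed
    then have "n \<bullet> x > - (real k * of_int h)"
      using interior_subset_halfspace_gt[OF _ _ x(1)] fn facet_normal_primitive primitive_vec_nonzero
      by blast
    moreover have "n \<bullet> x \<in> \<int>"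
      using fn x(2) facet_normal_primitive lattice_point_inner_Ints unfolding primitive_vec_def by blast
    then obtain m where m: "n \<bullet> x = of_int m"
      by (rule Ints_cases)
    ultimately have "of_int (- (int k * h)) < (of_int m :: real)"
      by simp
    then have "of_int (1 - int k * h) \<le> (of_int m :: real)"
      by (simp only: of_int_less_iff of_int_le_iff)
    then show ?thesis
      unfolding m by simp
  qed
  then show "x \<in> facet_polyhedron P (\<lambda>h. 1 - real k * of_int h)"
    unfolding facet_polyhedron_def by blast
qed

lemma remainder_polytope_eq_convex_hull:
  "remainder_polytope P = convex hull
     {x \<in> facet_polyhedron P (\<lambda>h. (real (codegree P) - 1) * of_int h - 1). lattice_point x}"
  unfolding remainder_polytope_def facet_polyhedron_def by (simp add: conj_commute)

lemma minkowski_sum_codegree_polyhedra_subset: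
  fixes P :: "(real^'n) set"
  assumes "lattice_polytope P" "interior P \<noteq> {}"
  shows "minkowski_sum (facet_polyhedron P (\<lambda>h. 1 - t * of_int h))
           (facet_polyhedron P (\<lambda>h. (t - 1) * of_int h - 1)) \<subseteq> P"
proof -
  have "minkowski_sum (facet_polyhedron P (\<lambda>h. 1 - t * of_int h))
          (facet_polyhedron P (\<lambda>h. (t - 1) * of_int h - 1)) \<subseteq>
        facet_polyhedron P (\<lambda>h. 1 - t * of_int h + ((t - 1) * of_int h - 1))"
    by (rule minkowski_sum_facet_polyhedron_subset)
  also have "\<dots> = facet_polyhedron P (\<lambda>h. - of_int h)"
    by (simp add: algebra_simps)
  also have "\<dots> = P"
    by (rule lattice_polytope_eq_facet_polyhedron[OF assms, symmetric])
  finally show ?thesis .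
qed

text \<open>The summands of the bounded set P are bounded, so the two hulls are polytopes;
  they are then squeezed between P and the sum of the closed sets.\<close>
lemma minkowski_sum_lattice_hulls_eq:
  fixes P Q1 Q2 G1 G2 :: "(real^'n) set"
  assumes P: "P = minkowski_sum (convex hull G1) (convex hull G2)" "lattice_polytope P"
    and sub: "minkowski_sum Q1 Q2 \<subseteq> P" "convex hull G1 \<subseteq> Q1" "convex hull G2 \<subseteq> Q2"
    and closed: "closed Q1" "closed Q2"
    and lattice: "\<forall>x\<in>G1. lattice_point x" "\<forall>x\<in>G2. lattice_point x"
  shows "Q1 = convex hull G1" "Q2 = convex hull G2" "lattice_polytope Q1" "lattice_polytope Q2"
proof -
  have "P \<noteq> {}"
    using P(2) unfolding lattice_polytope_def by auto
  then have "G1 \<noteq> {}" "G2 \<noteq> {}"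
    using P(1) unfolding minkowski_sum_def by auto
  have "bounded P"
    using compact_lattice_polytope[OF P(2)] by (rule compact_imp_bounded)
  then have "bounded (convex hull G2)" "bounded (convex hull G1)"
    using bounded_minkowski_summand[of "convex hull G1" "convex hull G2"]
      bounded_minkowski_summand[of "convex hull G2" "convex hull G1"]
      P(1) \<open>G1 \<noteq> {}\<close> \<open>G2 \<noteq> {}\<close> by (simp_all add: minkowski_sum_commute[of "convex hull G2"])
  then have "finite G1" "finite G2"
    using finite_bounded_lattice_points[OF bounded_subset[OF _ hull_subset]] lattice by blast+
  then have hulls: "compact (convex hull G1)" "compact (convex hull G2)"
    by (simp_all add: finite_imp_compact_convex_hull)
  have "minkowski_sum Q1 Q2 \<subseteq> minkowski_sum (convex hull G1) (convex hull G2)"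
    using sub(1) P(1) by simp
  moreover have "convex hull G1 \<noteq> {}" "convex hull G2 \<noteq> {}"
    using \<open>G1 \<noteq> {}\<close> \<open>G2 \<noteq> {}\<close> by simp_all
  ultimately have "convex hull G1 = Q1" "convex hull G2 = Q2"
    using minkowski_sum_sandwich[OF sub(2,3) _ hulls convex_convex_hull convex_convex_hull closed]
    by blast+
  then show eq: "Q1 = convex hull G1" "Q2 = convex hull G2"
    by simp_all
  show "lattice_polytope Q1" "lattice_polytope Q2"
    unfolding eq lattice_polytope_def
    using \<open>finite G1\<close> \<open>finite G2\<close> \<open>G1 \<noteq> {}\<close> \<open>G2 \<noteq> {}\<close> lattice by blast+
qed

theorem theorem3p12:
  fixes P :: "(real^'n) set"
  assumes "lattice_polytope P"
    and "interior P \<noteq> {}"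
    and "P = minkowski_sum (lattice_floor (dilate (codegree P) P)) (remainder_polytope P)"
  shows "(lattice_floor (dilate (codegree P) P) =
           {x. \<forall>F n h. facet_normal P F n h \<longrightarrow>
                 n \<bullet> x \<ge> 1 - real (codegree P) * of_int h}) \<and>
         (remainder_polytope P =
           {x. \<forall>F n h. facet_normal P F n h \<longrightarrow>
                 n \<bullet> x \<ge> (real (codegree P) - 1) * of_int h - 1}) \<and>
         lattice_polytope {x. \<forall>F n h. facet_normal P F n h \<longrightarrow>
                 n \<bullet> x \<ge> 1 - real (codegree P) * of_int h} \<and>
         lattice_polytope {x. \<forall>F n h. facet_normal P F n h \<longrightarrow>
                 n \<bullet> x \<ge> (real (codegree P) - 1) * of_int h - 1} \<and>
         (codegree P = 1 \<longrightarrow> reflexive_polytope (remainder_polytope P))"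
proof -
  define a where "a = codegree P"
  define Q1 where "Q1 = facet_polyhedron P (\<lambda>h. 1 - real a * of_int h)"
  define Q2 where "Q2 = facet_polyhedron P (\<lambda>h. (real a - 1) * of_int h - 1)"
  define G1 where "G1 = {x. x \<in> interior (dilate a P) \<and> lattice_point x}"
  define G2 where "G2 = {x \<in> Q2. lattice_point x}"
  have floor: "lattice_floor (dilate a P) = convex hull G1"
    unfolding lattice_floor_def G1_def ..
  have remainder: "remainder_polytope P = convex hull G2"
    unfolding G2_def Q2_def a_def by (rule remainder_polytope_eq_convex_hull)
  have split: "P = minkowski_sum (convex hull G1) (convex hull G2)"
    using assms(3) unfolding floor[symmetric] remainder[symmetric] a_def .
  have "minkowski_sum Q1 Q2 \<subseteq> P"
    unfolding Q1_def Q2_def by (rule minkowski_sum_codegree_polyhedra_subset[OF assms(1,2)])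
  moreover have "convex hull G1 \<subseteq> Q1"
    unfolding floor[symmetric] Q1_def by (rule lattice_floor_dilate_subset)
  moreover have "convex hull G2 \<subseteq> Q2"
    by (rule hull_minimal) (auto simp: G2_def Q2_def convex_facet_polyhedron)
  moreover have "closed Q1" "closed Q2"
    unfolding Q1_def Q2_def by (rule closed_facet_polyhedron)+
  moreover have "\<forall>x\<in>G1. lattice_point x" "\<forall>x\<in>G2. lattice_point x"
    unfolding G1_def G2_def by blast+
  ultimately have "Q1 = convex hull G1" "Q2 = convex hull G2" "lattice_polytope Q1" "lattice_polytope Q2"
    by (rule minkowski_sum_lattice_hulls_eq[OF split assms(1)])+
  moreover have "reflexive_polytope Q2" if "a = 1"
    using reflexive_polytope_facet_polyhedron[OF assms(1,2)] \<open>lattice_polytope Q2\<close>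
    unfolding Q2_def that by simp
  moreover have "{x. \<forall>F n h. facet_normal P F n h \<longrightarrow> n \<bullet> x \<ge> 1 - real a * of_int h} = Q1"
    "{x. \<forall>F n h. facet_normal P F n h \<longrightarrow> n \<bullet> x \<ge> (real a - 1) * of_int h - 1} = Q2"
    unfolding Q1_def Q2_def facet_polyhedron_def by simp_all
  ultimately show ?thesis
    unfolding a_def[symmetric] floor remainder by simp
qed

end
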